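(* For any odd prime $p$ and any positive integer $r$, $$p^{3r}\sum_{k=0}^{(p^r-3)/2}\frac{16^k}{(2k+1)^3\binom{2k}{k}^2}\equiv p^{3}\sum_{k=0}^{(p-3)/2}\frac{16^k}{(2k+1)^3\binom{2k}{k}^2}\pmod{p^4}.$$
   Context: A congruence $a\equiv b\pmod{p^m}$ between rational numbers means that $(a-b)/p^m$ is a rational number whose denominator is not divisible by $p$. *)

theory Defs
  imports Complex_Main "HOL-Computational_Algebra.Primes"
begin

definition rat_cong :: "rat \<Rightarrow> rat \<Rightarrow> int \<Rightarrow> nat \<Rightarrow> bool" where
  "rat_cong a b p m \<longleftrightarrow> \<not> p dvd snd (quotient_of ((a - b) / of_int p ^ m))"

definition S :: "nat \<Rightarrow> rat" where
  "S n = (\<Sum>k = 0..n. 16 ^ k / (of_nat (2*k+1) ^ 3 * of_nat ((2*k) choose k) ^ 2))"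

end

theory Submission
  imports Defs "HOL-Number_Theory.Cong"
begin

text \<open>
  Write the summand of S as t(k) = A(k)^2 / (2k+1) with A(k) = (2k)!! / (2k+1)!!, which equals
  4^k / ((2k+1) binom(2k, k)). Sorting the factors of A(k) by divisibility by p gives
  A(k) = U(k) A(k div p) w(k) with a p-adic unit U(k) and w(k) either 1/p or 2 (k div p) + 1, so
  p^r A(k) is p-integral whenever 2k+1 < p^(r+1). After scaling by p^(3(r+2)), the terms of the sum
  over 2k+1 < p^(r+2) with p not dividing 2k+1 vanish modulo p^4, while for 2k+1 = p(2l+1) one has
  t(k) = t(l) U(k)^2 / p^3, and U(k)^2 = 1 (mod p) because i |-> k - i matches each even factor 2i
  of U(k) with an odd factor 2(k-i)+1 = -2i (mod p). Hence the scaled sums for the exponents r+2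
  and r+1 agree modulo p^4. Below, t, A and U are S_term, dfact_ratio and unit_part.
\<close>

definition p_integral :: "nat \<Rightarrow> rat \<Rightarrow> bool" where
  "p_integral p x \<longleftrightarrow> (\<exists>a b. \<not> int p dvd b \<and> x = of_int a / of_int b)"

lemma rat_cong_iff_p_integral:
  "rat_cong a b (int p) m \<longleftrightarrow> p_integral p ((a - b) / of_nat p ^ m)"
proof -
  define x where "x = (a - b) / of_nat p ^ m"
  obtain n d where nd: "quotient_of x = (n, d)" by (cases "quotient_of x")
  have x: "x = of_int n / of_int d" and "d > 0" and "coprime n d"
    using nd quotient_of_div quotient_of_denom_pos quotient_of_coprime by blast+
  have "\<not> int p dvd d \<longleftrightarrow> p_integral p x"
  proof
    show "\<not> int p dvd d \<Longrightarrow> p_integral p x"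
      unfolding p_integral_def using x by blast
  next
    assume "p_integral p x"
    then obtain a' b' where b': "\<not> int p dvd b'" "x = of_int a' / of_int b'"
      unfolding p_integral_def by blast
    then have "b' \<noteq> 0" by auto
    then have "n * b' = a' * d"
      using x b'(2) \<open>d > 0\<close> by (simp add: field_simps flip: of_int_mult)
    then have "d dvd b'"
      using \<open>coprime n d\<close> by (metis coprime_commute coprime_dvd_mult_right_iff dvd_triv_right)
    then show "\<not> int p dvd d" using b'(1) dvd_trans by blast
  qed
  moreover have "rat_cong a b (int p) m \<longleftrightarrow> \<not> int p dvd d"
    unfolding rat_cong_def using nd x_def by simp
  ultimately show ?thesis unfolding x_def by simp
qed

locale prime_number =
  fixes p :: nat
  assumes prime_p: "prime p"
begin

lemma p_integral_of_int [simp]: "p_integral p (of_int a)"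
  unfolding p_integral_def using prime_p
  by (intro exI[of _ a] exI[of _ 1]) (auto simp: prime_gt_1_nat)

lemma p_integral_of_nat [simp]: "p_integral p (of_nat n)"
  using p_integral_of_int[of "int n"] by simp

lemma p_integral_0 [simp]: "p_integral p 0"
  using p_integral_of_int[of 0] by simp

lemma p_integral_1 [simp]: "p_integral p 1"
  using p_integral_of_int[of 1] by simp

lemma p_integral_mult [intro]:
  assumes "p_integral p x" "p_integral p y"
  shows "p_integral p (x * y)"
proof -
  obtain a b c d where "\<not> int p dvd b" "x = of_int a / of_int b"
    "\<not> int p dvd d" "y = of_int c / of_int d"
    using assms unfolding p_integral_def by blast
  moreover from calculation have "\<not> int p dvd b * d"
    using prime_p by (simp add: prime_dvd_mult_iff)
  ultimately show ?thesis
    unfolding p_integral_def by (intro exI[of _ "a * c"] exI[of _ "b * d"]) simp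
qed

lemma p_integral_add [intro]:
  assumes "p_integral p x" "p_integral p y"
  shows "p_integral p (x + y)"
proof -
  obtain a b c d where "\<not> int p dvd b" "x = of_int a / of_int b"
    "\<not> int p dvd d" "y = of_int c / of_int d"
    using assms unfolding p_integral_def by blast
  moreover from calculation have "\<not> int p dvd b * d"
    using prime_p by (simp add: prime_dvd_mult_iff)
  moreover from calculation have "b \<noteq> 0" "d \<noteq> 0" by auto
  ultimately show ?thesis
    unfolding p_integral_def
    by (intro exI[of _ "a * d + c * b"] exI[of _ "b * d"]) (simp add: field_simps)
qed

lemma p_integral_power [intro]: "p_integral p x \<Longrightarrow> p_integral p (x ^ n)"
  by (induction n) auto

lemma p_integral_divide_int:
  assumes "p_integral p x" "\<not> int p dvd b"
  shows "p_integral p (x / of_int b)"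
proof -
  obtain a c where "\<not> int p dvd c" "x = of_int a / of_int c"
    using assms(1) unfolding p_integral_def by blast
  moreover from calculation have "\<not> int p dvd c * b"
    using assms(2) prime_p by (simp add: prime_dvd_mult_iff)
  ultimately show ?thesis
    unfolding p_integral_def by (intro exI[of _ a] exI[of _ "c * b"]) simp
qed

lemma p_integral_divide_nat:
  "p_integral p x \<Longrightarrow> \<not> p dvd n \<Longrightarrow> p_integral p (x / of_nat n)"
  using p_integral_divide_int[of x "int n"] by simp

lemma p_integral_power_divide:
  assumes "0 < n" "n < p ^ Suc r"
  shows "p_integral p (of_nat p ^ r / of_nat n)"
proof -
  have "\<not> is_unit p" using prime_p not_prime_unit by blast
  then obtain u where u: "n = p ^ multiplicity p n * u" "\<not> p dvd u"
    using multiplicity_decompose'[of n p] assms(1) by auto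
  define e where "e = multiplicity p n"
  have "p ^ e \<le> n" using u assms(1) unfolding e_def
    by (metis dvd_imp_le dvd_triv_left)
  then have "e \<le> r"
    using assms(2) prime_gt_1_nat[OF prime_p] by (metis le_less_trans less_Suc_eq_le power_less_imp_less_exp)
  then have "of_nat p ^ r / of_nat n = (of_nat p ^ (r - e) / of_nat u :: rat)"
    using u(1) prime_gt_0_nat[OF prime_p] unfolding e_def[symmetric]
    by (simp add: power_diff)
  then show ?thesis
    using p_integral_divide_nat[OF _ u(2)] by (simp flip: of_nat_power)
qed

lemma rat_cong_refl [simp]: "rat_cong a a (int p) m"
  by (simp add: rat_cong_iff_p_integral)

lemma rat_cong_add:
  assumes "rat_cong a b (int p) m" "rat_cong c d (int p) m"
  shows "rat_cong (a + c) (b + d) (int p) m"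
proof -
  have "(a + c - (b + d)) / of_nat p ^ m = (a - b) / of_nat p ^ m + (c - d) / of_nat p ^ m"
    by (simp add: add_divide_distrib diff_divide_distrib)
  then show ?thesis using assms unfolding rat_cong_iff_p_integral by auto
qed

lemma rat_cong_trans:
  "rat_cong a b (int p) m \<Longrightarrow> rat_cong b c (int p) m \<Longrightarrow> rat_cong a c (int p) m"
  using rat_cong_add[of a b m b c] by (simp add: rat_cong_iff_p_integral)

lemma rat_cong_sum:
  "(\<And>i. i \<in> A \<Longrightarrow> rat_cong (f i) (g i) (int p) m) \<Longrightarrow>
     rat_cong (sum f A) (sum g A) (int p) m"
  by (induction A rule: infinite_finite_induct) (simp_all add: rat_cong_add)

end

lemma central_binomial_Suc:
  "(k + 1) * ((2*k + 2) choose (k + 1)) = 2 * (2*k + 1) * ((2*k) choose k)"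
proof -
  define C where "C = (2*k + 1) choose k"
  have "(k + 1) * ((2*k + 2) choose (k + 1)) = (2*k + 2) * C"
    using Suc_times_binomial_eq[of "2*k + 1" k] unfolding C_def by (simp add: mult.commute)
  also have "\<dots> = 2 * ((k + 1) * C)" by simp
  also have "(k + 1) * C = (2*k + 1) * ((2*k) choose k)"
    using binomial_absorb_comp[of "2*k + 1" k] unfolding C_def by (simp add: Suc_diff_le)
  finally show ?thesis by simp
qed

definition dfact_ratio :: "nat \<Rightarrow> rat" where
  "dfact_ratio k = (\<Prod>i = 1..k. of_nat (2*i) / of_nat (2*i + 1))"

lemma dfact_ratio_0 [simp]: "dfact_ratio 0 = 1"
  by (simp add: dfact_ratio_def)

lemma dfact_ratio_Suc: "dfact_ratio (Suc k) = dfact_ratio k * of_nat (2*k + 2) / of_nat (2*k + 3)"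
  by (simp add: dfact_ratio_def prod.nat_ivl_Suc')

lemma dfact_ratio_central_binomial:
  "of_nat (2*k + 1) * of_nat ((2*k) choose k) * dfact_ratio k = 4 ^ k"
proof (induction k)
  case (Suc k)
  define C where "C = (2*k) choose k"
  define C' where "C' = (2*k + 2) choose (k + 1)"
  have C': "(2 * Suc k) choose (Suc k) = C'" unfolding C'_def by simp
  have "of_nat (k + 1) * of_nat C' = (2 * of_nat (2*k + 1) * of_nat C :: rat)"
    using arg_cong[OF central_binomial_Suc[of k], of "of_nat :: nat \<Rightarrow> rat"]
    unfolding C_def C'_def by (simp only: of_nat_mult of_nat_numeral)
  then have C'_eq: "of_nat (2*k + 2) * of_nat C' = (4 * (of_nat (2*k + 1) * of_nat C) :: rat)"
    by (simp add: algebra_simps)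
  have "of_nat (2 * Suc k + 1) * of_nat C' * dfact_ratio (Suc k)
      = of_nat C' * (of_nat (2 * Suc k + 1) * dfact_ratio (Suc k))" by (simp only: ac_simps)
  also have "\<dots> = (of_nat (2*k + 2) * of_nat C') * dfact_ratio k"
    by (simp add: dfact_ratio_Suc field_simps)
  also have "\<dots> = 4 * 4 ^ k"
    using Suc.IH unfolding C'_eq C_def by (simp only: ac_simps)
  finally show ?case unfolding C' by simp
qed simp

definition S_term :: "nat \<Rightarrow> rat" where
  "S_term k = dfact_ratio k ^ 2 / of_nat (2*k + 1)"

lemma S_eq_sum_S_term: "S n = (\<Sum>k = 0..n. S_term k)"
proof -
  have cancel: "(x * c * a) ^ 2 / (x ^ 3 * c ^ 2) = a ^ 2 / x" if "x \<noteq> 0" "c \<noteq> 0" for x c a :: rat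
    using that by (simp add: power2_eq_square power3_eq_cube)
  have "16 ^ k / (of_nat (2*k + 1) ^ 3 * of_nat ((2*k) choose k) ^ 2) = S_term k" for k
  proof -
    have "(4 ^ k) ^ 2 = ((4::rat) ^ 2) ^ k" by (simp only: power_mult[symmetric] mult.commute)
    then have "(16::rat) ^ k = (of_nat (2*k + 1) * of_nat ((2*k) choose k) * dfact_ratio k) ^ 2"
      by (simp only: dfact_ratio_central_binomial) simp
    then show ?thesis
      unfolding S_term_def
      using cancel[of "of_nat (2*k + 1)" "of_nat ((2*k) choose k)" "dfact_ratio k"] by simp
  qed
  then show ?thesis unfolding S_def by simp
qed

lemma S_eq_sum_odd_below:
  assumes "odd N" "3 \<le> N"
  shows "S ((N - 3) div 2) = (\<Sum>k | 2*k + 1 < N. S_term k)"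
proof -
  have "{0..(N - 3) div 2} = {k. 2*k + 1 < N}" using assms by (auto elim!: oddE)
  then show ?thesis unfolding S_eq_sum_S_term by simp
qed

lemma mult_add_div_mod:
  fixes n q s :: nat
  assumes "s < n"
  shows "(n*q + s) div n = q" "(n*q + s) mod n = s"
  using assms by (simp_all add: div_nat_eqI)

lemma filter_atMost_Suc:
  "{i \<in> {..Suc k}. P i} = (if P (Suc k) then insert (Suc k) {i \<in> {..k}. P i} else {i \<in> {..k}. P i})"
  by (auto simp: le_Suc_eq)

locale odd_prime = prime_number +
  assumes odd_p: "odd p"
begin

lemma p_ge_3: "p \<ge> 3"
  using prime_ge_2_nat[OF prime_p] odd_p by (cases "p = 2") auto

lemma not_dvd_2: "\<not> p dvd 2"
  using p_ge_3 by (auto dest: dvd_imp_le)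

definition coprime_evens :: "nat \<Rightarrow> int" where
  "coprime_evens k = (\<Prod>i \<in> {i \<in> {..k}. \<not> p dvd i}. 2 * int i)"

definition coprime_odds :: "nat \<Rightarrow> int" where
  "coprime_odds k = (\<Prod>i \<in> {i \<in> {..k}. \<not> p dvd 2*i + 1}. 2 * int i + 1)"

definition unit_part :: "nat \<Rightarrow> rat" where
  "unit_part k = of_int (coprime_evens k) / of_int (coprime_odds k)"

lemma coprime_evens_Suc:
  "coprime_evens (Suc k) = (if p dvd Suc k then 1 else 2 * int k + 2) * coprime_evens k"
  unfolding coprime_evens_def filter_atMost_Suc[where P = "\<lambda>i. \<not> p dvd i"] by simp

lemma coprime_odds_Suc:
  "coprime_odds (Suc k) = (if p dvd 2*k + 3 then 1 else 2 * int k + 3) * coprime_odds k"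
  unfolding coprime_odds_def filter_atMost_Suc[where P = "\<lambda>i. \<not> p dvd 2*i + 1"]
  by (simp add: numeral_3_eq_3)

lemma coprime_odds_not_dvd: "\<not> int p dvd coprime_odds k"
proof
  assume "int p dvd coprime_odds k"
  then obtain i where "\<not> p dvd 2*i + 1" "int p dvd 2 * int i + 1"
    using prime_p unfolding coprime_odds_def by (subst (asm) prime_dvd_prod_iff) auto
  moreover from this have "int p dvd int (2*i + 1)" by (simp add: ac_simps)
  ultimately show False by (simp only: int_dvd_int_iff)
qed

lemma p_integral_unit_part: "p_integral p (unit_part k)"
  unfolding unit_part_def using coprime_odds_not_dvd by (intro p_integral_divide_int) auto

lemma unit_part_Suc:
  "unit_part (Suc k) = unit_part k
     * (if p dvd Suc k then 1 else of_nat (2*k + 2)) / (if p dvd 2*k + 3 then 1 else of_nat (2*k + 3))"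
  unfolding unit_part_def coprime_evens_Suc coprime_odds_Suc by (simp add: ac_simps)

text \<open>In dfact_ratio the factors 2i with p | i give p^q (2q)!! and the factors 2i+1 with
  p | 2i+1 give p^(q'+1) (2q'+1)!!, where q = k div p, and q' = q or q' = q - 1 according as
  2 (k mod p) + 1 \<ge> p or not; p_part is their quotient.\<close>
definition p_part :: "nat \<Rightarrow> rat" where
  "p_part k = dfact_ratio (k div p)
     * (if p \<le> 2 * (k mod p) + 1 then 1 / of_nat p else of_nat (2 * (k div p) + 1))"

lemma p_part_Suc_of_dvd_Suc:
  assumes "p dvd Suc k"
  shows "p_part (Suc k) = p_part k * of_nat (2*k + 2)"
proof -
  define q where "q = k div p"
  have "k mod p = p - 1"
    using assms p_ge_3 mod_Suc[of k p] by (auto simp: dvd_eq_mod_eq_0 split: if_splits)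
  then have k: "k = p*q + (p - 1)" unfolding q_def by (metis div_mult_mod_eq mult.commute)
  then have "Suc k = p * Suc q + 0" using p_ge_3 by simp
  then have "Suc k div p = Suc q" "Suc k mod p = 0"
    using mult_add_div_mod[of 0 p "Suc q"] p_ge_3 by simp_all
  then have "p_part (Suc k) = dfact_ratio q * of_nat (2*q + 2)"
    using p_ge_3 by (simp add: p_part_def dfact_ratio_Suc add.commute)
  moreover have "p \<le> 2 * (k mod p) + 1" using \<open>k mod p = p - 1\<close> p_ge_3 by arith
  then have "p_part k = dfact_ratio q / of_nat p" by (simp add: p_part_def q_def[symmetric])
  moreover have "2*k + 2 = p * (2*q + 2)"
    using k p_ge_3 by (simp add: algebra_simps)
  then have "(of_nat (2*k + 2) :: rat) = of_nat p * of_nat (2*q + 2)"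
    by (simp only: of_nat_mult)
  ultimately show ?thesis using p_ge_3 by simp
qed

lemma p_part_Suc_of_dvd_odd:
  assumes "p dvd 2*k + 3"
  shows "p_part (Suc k) = p_part k / of_nat (2*k + 3)"
proof -
  define q s where "q = k div p" and "s = k mod p"
  have k: "k = p*q + s" and "s < p" using p_ge_3 by (simp_all add: q_def s_def)
  have "2*k + 3 = p * (2*q) + (2*s + 3)" using k by simp
  then have "p dvd 2*s + 3" using assms by (metis dvd_add_right_iff dvd_mult2 dvd_refl)
  then obtain c where c: "2*s + 3 = p * c" by blast
  moreover have "odd (p * c)" using c[symmetric] by simp
  then have "odd c" by simp
  moreover have "p * c < p * 3" using c \<open>s < p\<close> p_ge_3 by linarith
  then have "c < 3" by simp
  ultimately have s: "2*s + 3 = p" using c by (cases c) (auto simp: numeral_3_eq_3 less_Suc_eq)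
  then have "Suc k = p*q + Suc s" "Suc s < p" using k by simp_all
  then have "Suc k div p = q" "Suc k mod p = Suc s"
    using mult_add_div_mod[of "Suc s" p q] by simp_all
  then have "p_part (Suc k) = dfact_ratio q / of_nat p"
    using s by (simp add: p_part_def)
  moreover have "p_part k = dfact_ratio q * of_nat (2*q + 1)"
    using s by (simp add: p_part_def q_def[symmetric] s_def[symmetric])
  moreover have "2*k + 3 = p * (2*q + 1)" using k s by (simp add: algebra_simps)
  ultimately show ?thesis
    by (metis nonzero_mult_divide_mult_cancel_right of_nat_mult of_nat_eq_0_iff add_is_0 one_neq_zero)
qed

lemma p_part_Suc_of_coprime:
  assumes "\<not> p dvd Suc k" "\<not> p dvd 2*k + 3"
  shows "p_part (Suc k) = p_part k"
proof -
  define q s where "q = k div p" and "s = k mod p"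
  have k: "k = p*q + s" and "s < p" using p_ge_3 by (simp_all add: q_def s_def)
  have "Suc s \<noteq> p"
  proof
    assume "Suc s = p"
    then have "Suc k = p * Suc q" using k by simp
    then show False using assms(1) by simp
  qed
  then have "Suc k = p*q + Suc s" "Suc s < p" using k \<open>s < p\<close> by simp_all
  then have "Suc k div p = q" "Suc k mod p = Suc s"
    using mult_add_div_mod[of "Suc s" p q] by simp_all
  moreover have "2*s + 3 \<noteq> p"
  proof
    assume "2*s + 3 = p"
    then have "2*k + 3 = p * (2*q + 1)" using k by (simp add: algebra_simps)
    then show False using assms(2) by simp
  qed
  then have "p \<le> 2*s + 1 \<longleftrightarrow> p \<le> 2 * Suc s + 1" using odd_p by presburger
  ultimately show ?thesis by (simp add: p_part_def q_def[symmetric] s_def[symmetric])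
qed

lemma dfact_ratio_eq_unit_part_mult_p_part: "dfact_ratio k = unit_part k * p_part k"
proof (induction k)
  case 0
  have evens: "{i \<in> {..0}. \<not> p dvd i} = {}" and odds: "{i \<in> {..0::nat}. \<not> p dvd 2*i + 1} = {0}"
    using p_ge_3 by (auto intro: gr0I)
  have "unit_part 0 = 1" unfolding unit_part_def coprime_evens_def coprime_odds_def evens odds by simp
  then show ?case using p_ge_3 by (simp add: p_part_def)
next
  case (Suc k)
  have "\<not> (p dvd Suc k \<and> p dvd 2*k + 3)"
  proof
    assume *: "p dvd Suc k \<and> p dvd 2*k + 3"
    have "2*k + 3 = 2 * Suc k + 1" by simp
    then have "p dvd 2 * Suc k + 1" using * by metis
    moreover have "p dvd 2 * Suc k" using * by (metis dvd_mult)
    ultimately have "p dvd 1" using dvd_add_right_iff by blast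
    then show False using p_ge_3 by simp
  qed
  then consider "p dvd Suc k" "\<not> p dvd 2*k + 3" | "p dvd 2*k + 3" "\<not> p dvd Suc k"
    | "\<not> p dvd Suc k" "\<not> p dvd 2*k + 3" by blast
  then show ?case
  proof cases
    case 1
    then show ?thesis
      by (simp add: dfact_ratio_Suc unit_part_Suc Suc.IH p_part_Suc_of_dvd_Suc)
  next
    case 2
    then show ?thesis
      by (simp add: dfact_ratio_Suc unit_part_Suc Suc.IH p_part_Suc_of_dvd_odd)
  next
    case 3
    then show ?thesis
      by (simp add: dfact_ratio_Suc unit_part_Suc Suc.IH p_part_Suc_of_coprime)
  qed
qed

lemma p_integral_p_power_dfact_ratio:
  "2*k + 1 < p ^ Suc r \<Longrightarrow> p_integral p (of_nat p ^ r * dfact_ratio k)"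
proof (induction k arbitrary: r rule: less_induct)
  case (less k)
  define q s where "q = k div p" and "s = k mod p"
  have k: "k = p*q + s" using p_ge_3 by (simp add: q_def s_def)
  have dfact_k: "dfact_ratio k = unit_part k * p_part k"
    by (rule dfact_ratio_eq_unit_part_mult_p_part)
  show ?case
  proof (cases "k = 0")
    case False
    then have "q < k" using p_ge_3 by (simp add: q_def)
    show ?thesis
    proof (cases "p \<le> 2*s + 1")
      case True
      then have "p * (2*q + 1) < p * p ^ r" using k less.prems by (simp add: algebra_simps)
      then have q_lt: "2*q + 1 < p ^ r" by (metis mult_less_cancel1)
      then obtain r' where r: "r = Suc r'" by (cases r) auto
      have "of_nat p ^ r * dfact_ratio k = unit_part k * (of_nat p ^ r' * dfact_ratio q)"
        using True p_ge_3 unfolding dfact_k r by (simp add: p_part_def q_def[symmetric] s_def[symmetric])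
      moreover have "p_integral p (of_nat p ^ r' * dfact_ratio q)"
        using less.IH[OF \<open>q < k\<close>] q_lt unfolding r by blast
      ultimately show ?thesis by (metis p_integral_mult p_integral_of_nat p_integral_unit_part)
    next
      case False
      have "of_nat p ^ r * dfact_ratio k = unit_part k * of_nat (2*q + 1) * (of_nat p ^ r * dfact_ratio q)"
        using False unfolding dfact_k by (simp add: p_part_def q_def[symmetric] s_def[symmetric])
      moreover have "2*q + 1 < p ^ Suc r" using \<open>q < k\<close> less.prems by simp
      then have "p_integral p (of_nat p ^ r * dfact_ratio q)" using less.IH[OF \<open>q < k\<close>] by blast
      ultimately show ?thesis by (metis p_integral_mult p_integral_of_nat p_integral_unit_part)
    qed
  qed (auto simp flip: of_nat_power)
qed

lemma p_integral_p_power_S_term: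
  assumes "2*k + 1 < p ^ Suc r"
  shows "p_integral p (of_nat p ^ (3*r) * S_term k)"
proof -
  have "of_nat p ^ (3*r) * S_term k
      = (of_nat p ^ r * dfact_ratio k) ^ 2 * (of_nat p ^ r / of_nat (2*k + 1))"
    by (simp add: S_term_def field_simps flip: power_mult power_add)
  then show ?thesis
    by (metis p_integral_mult p_integral_power p_integral_p_power_dfact_ratio[OF assms]
        p_integral_power_divide[OF _ assms] zero_less_Suc Suc_eq_plus1)
qed

lemma coprime_odds_cong_coprime_evens:
  assumes "p dvd 2*k + 1"
  shows "[coprime_odds k = (-1) ^ card {i \<in> {..k}. \<not> p dvd i} * coprime_evens k] (mod int p)"
proof -
  define E where "E = {i \<in> {..k}. \<not> p dvd i}"
  have reflect: "p dvd 2*(k - i) + 1 \<longleftrightarrow> p dvd i" if "i \<le> k" for i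
  proof -
    have "2*(k - i) + 1 + 2*i = 2*k + 1" using that by simp
    then have "p dvd 2*(k - i) + 1 \<longleftrightarrow> p dvd 2*i"
      using assms by (metis dvd_add_left_iff dvd_add_right_iff)
    also have "\<dots> \<longleftrightarrow> p dvd i"
      using prime_dvd_mult_iff[OF prime_p] not_dvd_2 by auto
    finally show ?thesis .
  qed
  have "coprime_odds k = (\<Prod>i \<in> E. 2 * int (k - i) + 1)"
    unfolding coprime_odds_def E_def
  proof (rule prod.reindex_bij_witness[of _ "\<lambda>i. k - i" "\<lambda>i. k - i"])
    fix j assume "j \<in> {j \<in> {..k}. \<not> p dvd 2*j + 1}"
    then show "k - j \<in> {i \<in> {..k}. \<not> p dvd i}" using reflect[of "k - j"] by auto
  qed (use reflect in auto)
  also have "[\<dots> = (\<Prod>i \<in> E. - (2 * int i))] (mod int p)"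
  proof (rule cong_prod)
    fix i assume "i \<in> E"
    then have "2 * int (k - i) + 1 - - (2 * int i) = int (2*k + 1)" by (auto simp: E_def)
    then show "[2 * int (k - i) + 1 = - (2 * int i)] (mod int p)"
      using assms unfolding cong_iff_dvd_diff by (metis int_dvd_int_iff)
  qed
  finally show ?thesis unfolding prod_uminus coprime_evens_def E_def .
qed

lemma p_integral_unit_part_square_minus_1:
  assumes "p dvd 2*k + 1"
  shows "p_integral p ((unit_part k ^ 2 - 1) / of_nat p)"
proof -
  have "[coprime_odds k ^ 2 = coprime_evens k ^ 2] (mod int p)"
    using cong_pow[OF coprime_odds_cong_coprime_evens[OF assms], of 2]
    by (simp add: power_mult_distrib flip: power_mult)
  then obtain c where c: "coprime_evens k ^ 2 - coprime_odds k ^ 2 = int p * c"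
    by (metis cong_iff_dvd_diff cong_sym dvdE)
  have "coprime_odds k \<noteq> 0" using coprime_odds_not_dvd[of k] by auto
  then have "(unit_part k ^ 2 - 1) / of_nat p = of_int c / of_int (coprime_odds k ^ 2)"
    using p_ge_3 arg_cong[OF c, of "of_int :: int \<Rightarrow> rat"]
    unfolding unit_part_def by (simp add: field_simps power2_eq_square)
  moreover have "\<not> int p dvd coprime_odds k ^ 2"
    using coprime_odds_not_dvd prime_p by (simp add: prime_dvd_power_iff)
  ultimately show ?thesis using p_integral_divide_int[of "of_int c"] by (simp del: of_int_power)
qed

lemma double_half_p: "2 * ((p - 1) div 2) + 1 = p"
  using odd_p p_ge_3 by (auto elim: oddE)

lemma odd_multiples_of_p_below:
  "{k. 2*k + 1 < p ^ Suc n \<and> p dvd 2*k + 1} = (\<lambda>l. p*l + (p - 1) div 2) ` {l. 2*l + 1 < p ^ n}"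
proof -
  have eq: "2 * (p*l + (p - 1) div 2) + 1 = p * (2*l + 1)" for l
    using double_half_p by (simp add: algebra_simps)
  have "k \<in> (\<lambda>l. p*l + (p - 1) div 2) ` {l. 2*l + 1 < p ^ n}"
    if bound: "2*k + 1 < p ^ Suc n" and dvd: "p dvd 2*k + 1" for k
  proof -
    obtain c where c: "2*k + 1 = p * c" using dvd by blast
    then have "odd (p * c)" by presburger
    then obtain l where l: "c = 2*l + 1" by (auto elim: oddE)
    then have "k = p*l + (p - 1) div 2" using c eq[of l] by simp
    moreover have "p * (2*l + 1) < p * p ^ n" using bound c l by simp
    then have "2*l + 1 < p ^ n" by (metis mult_less_cancel1)
    ultimately show ?thesis by blast
  qed
  moreover have "2*k + 1 < p ^ Suc n \<and> p dvd 2*k + 1"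
    if "k = p*l + (p - 1) div 2" "2*l + 1 < p ^ n" for k l
    unfolding that(1) eq using that(2) p_ge_3 by (simp del: mult_Suc_right add: mult_less_cancel1)
  ultimately show ?thesis by blast
qed

lemma S_term_cong_0:
  assumes "\<not> p dvd 2*k + 1" "2*k + 1 < p ^ Suc (Suc r)"
  shows "rat_cong (of_nat p ^ (3 * Suc (Suc r)) * S_term k) 0 (int p) 4"
proof -
  have "3 * Suc (Suc r) = 4 + (Suc r * 2 + r)" by simp
  then have "(of_nat p ^ (3 * Suc (Suc r)) :: rat) = of_nat p ^ 4 * ((of_nat p ^ Suc r) ^ 2 * of_nat p ^ r)"
    by (simp only: power_add power_mult)
  then have "(of_nat p ^ (3 * Suc (Suc r)) * S_term k - 0) / of_nat p ^ 4
      = (of_nat p ^ Suc r * dfact_ratio k) ^ 2 * of_nat p ^ r / of_nat (2*k + 1)"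
    using p_ge_3 by (simp add: S_term_def power_mult_distrib)
  then show ?thesis
    unfolding rat_cong_iff_p_integral
    by (metis assms p_integral_divide_nat p_integral_mult p_integral_of_nat p_integral_power
        p_integral_p_power_dfact_ratio of_nat_power)
qed

lemma S_term_cong_S_term_quotient:
  assumes "2*l + 1 < p ^ Suc r"
  shows "rat_cong (of_nat p ^ (3 * Suc (Suc r)) * S_term (p*l + (p - 1) div 2))
                  (of_nat p ^ (3 * Suc r) * S_term l) (int p) 4"
proof -
  define k where "k = p*l + (p - 1) div 2"
  have k: "2*k + 1 = p * (2*l + 1)" using double_half_p unfolding k_def by (simp add: algebra_simps)
  have "(p - 1) div 2 < p" using p_ge_3 by simp
  then have "k div p = l" "p \<le> 2 * (k mod p) + 1"
    using mult_add_div_mod double_half_p unfolding k_def by simp_all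
  then have "dfact_ratio k = unit_part k * dfact_ratio l / of_nat p"
    unfolding dfact_ratio_eq_unit_part_mult_p_part[of k] p_part_def by simp
  moreover have "(u * a / x) ^ 2 / (x * n) = a ^ 2 / n * u ^ 2 / x ^ 3" for u a x n :: rat
    by (simp add: power2_eq_square power3_eq_cube mult_ac)
  ultimately have "S_term k = S_term l * unit_part k ^ 2 / of_nat p ^ 3"
    unfolding S_term_def k of_nat_mult by simp
  moreover have "(x ^ (c + 6) * (t * v ^ 2 / x ^ 3) - x ^ (c + 3) * t) / x ^ 4 = x ^ c * t * ((v ^ 2 - 1) / x)"
    if "x \<noteq> 0" for x t v :: rat and c
    using that by (simp add: power_add power2_eq_square field_simps eval_nat_numeral)
  ultimately have "(of_nat p ^ (3 * Suc (Suc r)) * S_term k - of_nat p ^ (3 * Suc r) * S_term l) / of_nat p ^ 4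
      = (of_nat p ^ (3*r) * S_term l) * ((unit_part k ^ 2 - 1) / of_nat p)"
    using p_ge_3 by (simp add: numeral_eq_Suc)
  then show ?thesis
    unfolding rat_cong_iff_p_integral k_def[symmetric]
    using p_integral_p_power_S_term[OF assms] p_integral_unit_part_square_minus_1[of k] k
    by (metis dvd_triv_left p_integral_mult)
qed

lemma S_eq_sum_below_p_power:
  assumes "0 < n"
  shows "S ((p ^ n - 3) div 2) = (\<Sum>k | 2*k + 1 < p ^ n. S_term k)"
proof (rule S_eq_sum_odd_below)
  have "p ^ 1 \<le> p ^ n" using assms p_ge_3 by (intro power_increasing) auto
  then show "3 \<le> p ^ n" using p_ge_3 by simp
qed (use odd_p in simp)

lemma S_scaled_cong_Suc:
  "rat_cong (of_nat p ^ (3 * Suc (Suc r)) * S ((p ^ Suc (Suc r) - 3) div 2))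
            (of_nat p ^ (3 * Suc r) * S ((p ^ Suc r - 3) div 2)) (int p) 4"
proof -
  define f where "f = (\<lambda>l. p*l + (p - 1) div 2)"
  define below where "below n = {k. 2*k + 1 < p ^ n}" for n
  define prime_to_p where "prime_to_p = {k \<in> below (Suc (Suc r)). \<not> p dvd 2*k + 1}"
  have S_below: "S ((p ^ n - 3) div 2) = sum S_term (below n)" if "0 < n" for n
    using S_eq_sum_below_p_power[OF that] unfolding below_def .
  have finite_below: "finite (below n)" for n
    unfolding below_def by (rule finite_subset[of _ "{..<p ^ n}"]) auto
  have "f ` below (Suc r) = {k \<in> below (Suc (Suc r)). p dvd 2*k + 1}"
    unfolding f_def below_def odd_multiples_of_p_below[symmetric] by simp
  then have split: "below (Suc (Suc r)) = prime_to_p \<union> f ` below (Suc r)"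
    and disjoint: "prime_to_p \<inter> f ` below (Suc r) = {}"
    unfolding prime_to_p_def by auto
  have "inj_on f (below (Suc r))" unfolding f_def inj_on_def using p_ge_3 by simp
  then have "sum S_term (below (Suc (Suc r))) = sum S_term prime_to_p + (\<Sum>l \<in> below (Suc r). S_term (f l))"
    unfolding split using finite_below disjoint
    by (simp add: sum.union_disjoint sum.reindex prime_to_p_def)
  then have "of_nat p ^ (3 * Suc (Suc r)) * S ((p ^ Suc (Suc r) - 3) div 2)
      = (\<Sum>k \<in> prime_to_p. of_nat p ^ (3 * Suc (Suc r)) * S_term k)
        + (\<Sum>l \<in> below (Suc r). of_nat p ^ (3 * Suc (Suc r)) * S_term (f l))"
    unfolding S_below[OF zero_less_Suc] by (simp add: distrib_left sum_distrib_left)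
  moreover have "rat_cong \<dots> (0 + (\<Sum>l \<in> below (Suc r). of_nat p ^ (3 * Suc r) * S_term l)) (int p) 4"
  proof (rule rat_cong_add)
    show "rat_cong (\<Sum>k \<in> prime_to_p. of_nat p ^ (3 * Suc (Suc r)) * S_term k) 0 (int p) 4"
      using rat_cong_sum[of prime_to_p _ "\<lambda>_. 0"] S_term_cong_0
      by (simp add: prime_to_p_def below_def)
    show "rat_cong (\<Sum>l \<in> below (Suc r). of_nat p ^ (3 * Suc (Suc r)) * S_term (f l))
        (\<Sum>l \<in> below (Suc r). of_nat p ^ (3 * Suc r) * S_term l) (int p) 4"
    proof (rule rat_cong_sum)
      fix l assume "l \<in> below (Suc r)"
      then show "rat_cong (of_nat p ^ (3 * Suc (Suc r)) * S_term (f l)) (of_nat p ^ (3 * Suc r) * S_term l) (int p) 4"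
        unfolding f_def by (intro S_term_cong_S_term_quotient) (simp add: below_def)
    qed
  qed
  ultimately show ?thesis
    unfolding S_below[OF zero_less_Suc] by (simp add: sum_distrib_left)
qed

lemma S_scaled_cong:
  "rat_cong (of_nat p ^ (3 * Suc r) * S ((p ^ Suc r - 3) div 2)) (of_nat p ^ 3 * S ((p - 3) div 2)) (int p) 4"
proof (induction r)
  case (Suc r)
  then show ?case using S_scaled_cong_Suc rat_cong_trans by blast
qed simp

end

theorem lemma3p2:
  fixes p r :: nat
  assumes "prime p" and "odd p" and "r > 0"
  shows "rat_cong (of_nat p ^ (3*r) * S ((p ^ r - 3) div 2))
                  (of_nat p ^ 3 * S ((p - 3) div 2)) (int p) 4"
proof -
  interpret odd_prime p using assms(1,2) by unfold_locales
  obtain r' where "r = Suc r'" using assms(3) gr0_implies_Suc by blast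
  then show ?thesis using S_scaled_cong[of r'] by simp
qed

end
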